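(* Let $\Psi_1 = 1$, and for each integer $k \geq 2$ let $\Psi_k = \frac{1 + \Psi_{k_1} + \Psi_{k_2}}{2}$, where for each $k$ the pair of positive integers $k_1, k_2$ with $k_1 + k_2 = k$ may be chosen arbitrarily. Then for every integer $k \geq 2$ there exist positive constants $C_k$ and $D_k$ (depending only on $k$ and the chosen sequence $(\Psi_j)$) such that for every real $M > 0$ and every finite set $A$ of positive real numbers with $|AA| \leq M|A|$, \[ |kA| \geq \frac{C_k}{M^{D_k}} \cdot |A|^{\Psi_k}. \] In particular, for every integer $k \geq 2$ there exist positive constants $C_k, D_k$ such that for every real $M>0$ and every finite set $A$ of positive real numbers with $|AA| \leq M|A|$, \[ |kA| \geq \frac{C_k}{M^{D_k}} \cdot |A|^{\log_4 (2k)}. \]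
   Context: For a finite set $A$ of real numbers, $AA = \{ab : a, b \in A\}$ is the product set, and $kA = \{a_1 + a_2 + \cdots + a_k : a_1, \dots, a_k \in A\}$ is the $k$-fold sum set. $|X|$ denotes the cardinality of a finite set $X$. *)

theory Defs
  imports Complex_Main
begin

definition prodset :: "real set \<Rightarrow> real set" where
  "prodset A = {a * b | a b. a \<in> A \<and> b \<in> A}"

definition sumset :: "nat \<Rightarrow> real set \<Rightarrow> real set" where
  "sumset k A = {sum_list xs | xs. length xs = k \<and> set xs \<subseteq> A}"

end

theory Submission
  imports Defs
begin

text \<open>If \<open>|AA| \<le> M |A|\<close>, at least \<open>|A| / 2\<close> ratios \<open>r\<close> are rich: \<open>B\<^sub>r = A \<inter> r\<^sup>-\<^sup>1 A\<close> has at
  least \<open>|A| / (2 M\<^sup>2)\<close> elements. Each \<open>B\<^sub>r\<close> still has a small product set, so by induction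
  \<open>k\<^sub>1 B\<^sub>r\<close> and \<open>k\<^sub>2 B\<^sub>r\<close> are large. For consecutive rich ratios \<open>r < r'\<close>, the points
  \<open>(s + t, r s + r' t)\<close> with \<open>s \<in> k\<^sub>1 B\<^sub>r\<close> and \<open>t \<in> k\<^sub>2 B\<^sub>r\<^sub>'\<close> are distinct, lie in \<open>kA \<times> kA\<close>
  and fill pairwise disjoint cones (Solymosi's argument). So, up to powers of \<open>M\<close>,
  \<open>|kA|\<^sup>2 \<ge> |A| \<cdot> |A|\<^bsup>\<Psi>(k\<^sub>1)\<^esup> \<cdot> |A|\<^bsup>\<Psi>(k\<^sub>2)\<^esup>\<close>, which gives the exponent \<open>(1 + \<Psi>(k\<^sub>1) + \<Psi>(k\<^sub>2)) / 2\<close>.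
  Halving \<open>2\<^sup>m\<close> repeatedly yields the exponent \<open>1 + m / 2 \<ge> log\<^sub>4 (2k)\<close> for
  \<open>2\<^sup>m \<le> k < 2\<^sup>m\<^sup>+\<^sup>1\<close>, and exponents pass from \<open>2\<^sup>m\<close> to any larger \<open>k\<close>.\<close>

lemma finite_sumset: "finite A \<Longrightarrow> finite (sumset k A)"
proof -
  have "sumset k A = sum_list ` {xs. set xs \<subseteq> A \<and> length xs = k}"
    unfolding sumset_def by auto
  then show "finite A \<Longrightarrow> ?thesis"
    by (simp add: finite_lists_length_eq)
qed

lemma sumset_mono: "B \<subseteq> A \<Longrightarrow> sumset k B \<subseteq> sumset k A"
  unfolding sumset_def by blast

lemma add_mem_sumset:
  assumes "s \<in> sumset k1 A" "t \<in> sumset k2 A"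
  shows "s + t \<in> sumset (k1 + k2) A"
proof -
  obtain xs ys where "s = sum_list xs" "length xs = k1" "set xs \<subseteq> A"
    "t = sum_list ys" "length ys = k2" "set ys \<subseteq> A"
    using assms unfolding sumset_def by auto
  then show ?thesis
    unfolding sumset_def by (auto intro!: exI[of _ "xs @ ys"])
qed

lemma mult_mem_sumset:
  assumes "\<forall>b\<in>B. r * b \<in> A" "s \<in> sumset k B"
  shows "r * s \<in> sumset k A"
proof -
  obtain xs where xs: "s = sum_list xs" "length xs = k" "set xs \<subseteq> B"
    using assms(2) unfolding sumset_def by auto
  then have "r * s = sum_list (map ((*) r) xs)"
    by (simp add: sum_list_const_mult)
  moreover have "set (map ((*) r) xs) \<subseteq> A"
    using xs assms(1) by auto
  ultimately show ?thesis
    unfolding sumset_def using xs by force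
qed

lemma sumset_pos:
  assumes "k \<ge> 1" "\<forall>a\<in>A. a > 0" "s \<in> sumset k A"
  shows "s > 0"
proof -
  obtain xs where xs: "s = sum_list xs" "length xs = k" "set xs \<subseteq> A"
    using assms(3) unfolding sumset_def by auto
  then obtain y ys where "xs = y # ys"
    using assms(1) by (cases xs) auto
  moreover have "sum_list ys \<ge> 0"
    using xs(3) assms(2) \<open>xs = y # ys\<close> by (intro sum_list_nonneg) force
  ultimately show ?thesis
    using xs assms(2) by auto
qed

lemma sumset_1 [simp]: "sumset 1 A = A"
  unfolding sumset_def
  by (auto simp: length_Suc_conv intro!: exI[of _ "[x]" for x])

lemma replicate_sum_mem_sumset: "a \<in> A \<Longrightarrow> sum_list (replicate k a) \<in> sumset k A"
  unfolding sumset_def by force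

lemma card_sumset_mono:
  assumes "finite A" "A \<noteq> {}" "k \<le> k'"
  shows "card (sumset k A) \<le> card (sumset k' A)"
proof -
  obtain a where a: "a \<in> A"
    using assms(2) by blast
  define c where "c = sum_list (replicate (k' - k) a)"
  have "(\<lambda>s. s + c) ` sumset k A \<subseteq> sumset k' A"
    using add_mem_sumset[OF _ replicate_sum_mem_sumset[OF a, of "k' - k"], of _ k] assms(3)
    by (auto simp: c_def)
  moreover have "inj_on (\<lambda>s. s + c) (sumset k A)"
    by (auto simp: inj_on_def)
  ultimately show ?thesis
    by (metis assms(1) card_image card_mono finite_sumset)
qed

lemma prodset_mono: "B \<subseteq> A \<Longrightarrow> prodset B \<subseteq> prodset A"
  unfolding prodset_def by blast

lemma finite_prodset: "finite A \<Longrightarrow> finite (prodset A)"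
proof -
  have "prodset A = (\<lambda>(a, b). a * b) ` (A \<times> A)"
    unfolding prodset_def by auto
  then show "finite A \<Longrightarrow> ?thesis"
    by simp
qed

lemma card_le_card_prodset:
  assumes "finite A" "\<forall>a\<in>A. a > 0"
  shows "card A \<le> card (prodset A)"
proof (cases "A = {}")
  case False
  then obtain a where a: "a \<in> A"
    by auto
  have "(*) a ` A \<subseteq> prodset A"
    using a unfolding prodset_def by auto
  moreover have "inj_on ((*) a) A"
    using a assms(2) by (auto simp: inj_on_def)
  ultimately show ?thesis
    by (metis assms(1) card_image card_mono finite_prodset)
qed simp

lemma doubling_constant_ge_1:
  assumes "finite A" "\<forall>a\<in>A. a > 0" "A \<noteq> {}" "real (card (prodset A)) \<le> M * real (card A)"
  shows "M \<ge> 1"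
proof -
  have "real (card A) \<le> M * real (card A)"
    using card_le_card_prodset[OF assms(1,2)] assms(4) by linarith
  moreover have "real (card A) > 0"
    using assms(1,3) by (simp add: card_gt_0_iff)
  ultimately show ?thesis
    by simp
qed

definition wedge_map :: "real \<Rightarrow> real \<Rightarrow> real \<times> real \<Rightarrow> real \<times> real" where
  "wedge_map r r' = (\<lambda>(s, t). (s + t, r * s + r' * t))"

lemma inj_on_wedge_map:
  assumes "r \<noteq> r'"
  shows "inj_on (wedge_map r r') X"
proof (rule inj_onI, clarsimp simp: wedge_map_def)
  fix s t s' t'
  assume "s + t = s' + t'" "r * s + r' * t = r * s' + r' * t'"
  moreover from this(1) have "t' = s + t - s'"
    by simp
  ultimately have "(r - r') * (s - s') = 0"
    by (simp add: algebra_simps)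
  then show "s = s' \<and> t = t'"
    using assms \<open>s + t = s' + t'\<close> by simp
qed

lemma wedge_map_between_slopes:
  assumes "r < r'" "s > 0" "t > 0" "wedge_map r r' (s, t) = (x, y)"
  shows "x > 0 \<and> r * x < y \<and> y < r' * x"
proof -
  have "r * s < r' * s" "r * t < r' * t"
    using assms(1-3) by simp_all
  then show ?thesis
    using assms(2-4) by (auto simp: wedge_map_def algebra_simps)
qed

lemma Min_greater_in:
  fixes R :: "'a::linorder set"
  assumes "finite R" "r \<in> R" "r < Max R"
  shows "Min {x\<in>R. r < x} \<in> R \<and> r < Min {x\<in>R. r < x} \<and> (\<forall>x\<in>R. r < x \<longrightarrow> Min {x\<in>R. r < x} \<le> x)"
proof -
  have "Max R \<in> R"
    using assms(1,2) Max_in by blast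
  then have "{x\<in>R. r < x} \<noteq> {}" "finite {x\<in>R. r < x}"
    using assms by auto
  then show ?thesis
    using Min_in[of "{x\<in>R. r < x}"] Min_le[of "{x\<in>R. r < x}"] by auto
qed

lemma wedge_map_images_disjoint:
  assumes "r1 < r1'" "r1' \<le> r2" "r2 < r2'"
    and "\<forall>s\<in>S1 \<union> S2. s > 0" "\<forall>t\<in>T1 \<union> T2. t > 0"
  shows "wedge_map r1 r1' ` (S1 \<times> T1) \<inter> wedge_map r2 r2' ` (S2 \<times> T2) = {}"
proof (rule ccontr)
  assume "wedge_map r1 r1' ` (S1 \<times> T1) \<inter> wedge_map r2 r2' ` (S2 \<times> T2) \<noteq> {}"
  then obtain x y where p1: "(x, y) \<in> wedge_map r1 r1' ` (S1 \<times> T1)"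
    and p2: "(x, y) \<in> wedge_map r2 r2' ` (S2 \<times> T2)"
    by auto
  from p1 obtain s1 t1 where st1: "s1 \<in> S1" "t1 \<in> T1" "wedge_map r1 r1' (s1, t1) = (x, y)"
    by auto
  from p2 obtain s2 t2 where st2: "s2 \<in> S2" "t2 \<in> T2" "wedge_map r2 r2' (s2, t2) = (x, y)"
    by auto
  have "x > 0" "y < r1' * x" "r2 * x < y"
    using wedge_map_between_slopes[OF assms(1) _ _ st1(3)] wedge_map_between_slopes[OF assms(3) _ _ st2(3)]
      st1(1,2) st2(1,2) assms(4,5) by auto
  moreover have "r1' * x \<le> r2 * x"
    using assms(2) \<open>x > 0\<close> by simp
  ultimately show False
    by linarith
qed

lemma sum_card_disjoint_le_card_sq:
  assumes "finite I" "finite Y" "\<forall>i\<in>I. W i \<subseteq> Y \<times> Y"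
    and "\<forall>i\<in>I. \<forall>j\<in>I. i \<noteq> j \<longrightarrow> W i \<inter> W j = {}"
  shows "(\<Sum>i\<in>I. card (W i)) \<le> card Y ^ 2"
proof -
  have "\<forall>i\<in>I. finite (W i)"
    using assms(2,3) finite_subset by blast
  then have "(\<Sum>i\<in>I. card (W i)) = card (\<Union>i\<in>I. W i)"
    using card_UN_disjoint[OF assms(1) _ assms(4)] by simp
  also have "\<dots> \<le> card (Y \<times> Y)"
    using assms(2,3) by (intro card_mono) auto
  finally show ?thesis
    by (simp add: card_cartesian_product power2_eq_square)
qed

text \<open>Each consecutive pair of slopes \<open>r < r'\<close> in \<open>R\<close> contributes the image of
  \<open>SA r \<times> SB r'\<close> under \<open>wedge_map r r'\<close>, a subset of \<open>Y \<times> Y\<close> of full size lying strictly between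
  the lines of slopes \<open>r\<close> and \<open>r'\<close>; these open cones are pairwise disjoint.\<close>

lemma card_sq_ge_wedges:
  fixes R Y :: "real set" and SA SB :: "real \<Rightarrow> real set"
  assumes finR: "finite R" and finY: "finite Y"
    and finS: "\<forall>r\<in>R. finite (SA r) \<and> finite (SB r)"
    and posS: "\<forall>r\<in>R. (\<forall>s\<in>SA r. s > 0) \<and> (\<forall>t\<in>SB r. t > 0)"
    and inY: "\<forall>r\<in>R. \<forall>r'\<in>R. \<forall>s\<in>SA r. \<forall>t\<in>SB r'. s + t \<in> Y \<and> r * s + r' * t \<in> Y"
    and LA: "\<forall>r\<in>R. real (card (SA r)) \<ge> LA" "LA \<ge> 0"
    and LB: "\<forall>r\<in>R. real (card (SB r)) \<ge> LB" "LB \<ge> 0"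
  shows "(real (card R) - 1) * LA * LB \<le> real (card Y) ^ 2"
proof (cases "R = {}")
  case True
  have "0 \<le> LA * LB"
    using LA LB by simp
  then have "(real (card R) - 1) * LA * LB \<le> 0"
    using True by simp
  then show ?thesis
    by (meson order_trans zero_le_power2)
next
  case False
  define R' where "R' = R - {Max R}"
  define succ where "succ r = Min {x\<in>R. r < x}" for r
  define W where "W r = wedge_map r (succ r) ` (SA r \<times> SB (succ r))" for r
  have R'R: "R' \<subseteq> R" and finR': "finite R'"
    using finR unfolding R'_def by auto
  have succ: "succ r \<in> R \<and> r < succ r \<and> (\<forall>x\<in>R. r < x \<longrightarrow> succ r \<le> x)" if "r \<in> R'" for r
    using that finR Min_greater_in[of R r] unfolding R'_def succ_def
    by (simp add: order_neq_le_trans)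
  have disjoint: "W r1 \<inter> W r2 = {}" if "r1 \<in> R'" "r2 \<in> R'" "r1 < r2" for r1 r2
    unfolding W_def using succ[OF that(1)] succ[OF that(2)] that R'R posS
    by (intro wedge_map_images_disjoint) auto
  have "\<forall>r\<in>R'. W r \<subseteq> Y \<times> Y"
    using inY succ R'R by (auto simp: W_def wedge_map_def)
  moreover have "\<forall>r1\<in>R'. \<forall>r2\<in>R'. r1 \<noteq> r2 \<longrightarrow> W r1 \<inter> W r2 = {}"
    using disjoint by (metis inf_commute linorder_neq_iff)
  ultimately have "(\<Sum>r\<in>R'. card (W r)) \<le> card Y ^ 2"
    using finR' finY by (intro sum_card_disjoint_le_card_sq)
  then have "(\<Sum>r\<in>R'. real (card (W r))) \<le> real (card Y) ^ 2"
    by (metis of_nat_le_iff of_nat_power of_nat_sum)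
  moreover have "LA * LB \<le> real (card (W r))" if "r \<in> R'" for r
  proof -
    have "card (W r) = card (SA r) * card (SB (succ r))"
      unfolding W_def using succ[OF that] inj_on_wedge_map[of r "succ r"]
      by (simp add: card_image card_cartesian_product)
    then show ?thesis
      using LA LB that R'R succ[OF that] by (auto intro!: mult_mono)
  qed
  then have "real (card R') * (LA * LB) \<le> (\<Sum>r\<in>R'. real (card (W r)))"
    using sum_mono[of R' "\<lambda>_. LA * LB"] by simp
  moreover have "real (card R') = real (card R) - 1"
    using Max_in[OF finR False] finR False unfolding R'_def by (simp add: card_gt_0_iff Suc_leI)
  ultimately show ?thesis
    by (simp add: mult.assoc)
qed

definition ratioset :: "real set \<Rightarrow> real set" where
  "ratioset A = (\<lambda>p. snd p / fst p) ` (A \<times> A)"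

lemma card_ratioset_mult_card_le:
  assumes finA: "finite A" and pos: "\<forall>a\<in>A. a > 0"
  shows "card (ratioset A) * card A \<le> card (prodset A) ^ 2"
proof -
  define R where "R = ratioset A"
  have "\<forall>r\<in>R. \<exists>p. p \<in> A \<times> A \<and> r = snd p / fst p"
    unfolding R_def ratioset_def by auto
  then obtain p where p: "\<forall>r\<in>R. p r \<in> A \<times> A \<and> r = snd (p r) / fst (p r)"
    by (rule bchoice[THEN exE])
  define num den where "num r = snd (p r)" and "den r = fst (p r)" for r
  have nd: "num r \<in> A \<and> den r \<in> A \<and> r = num r / den r" if "r \<in> R" for r
    using p that unfolding num_def den_def by (auto simp: mem_Times_iff)
  define g where "g q = (num (fst q) * snd q, den (fst q) * snd q)" for q
  \<comment> \<open>\<open>(r, x) \<mapsto> (num r * x, den r * x)\<close> recovers \<open>r\<close> as the quotient and then \<open>x\<close>.\<close>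
  have "inj_on g (R \<times> A)"
  proof (rule inj_onI, clarify)
    fix r1 x1 r2 x2
    assume in1: "r1 \<in> R" "x1 \<in> A" and in2: "r2 \<in> R" "x2 \<in> A" and eq: "g (r1, x1) = g (r2, x2)"
    have pos12: "x1 > 0" "x2 > 0" "den r1 > 0"
      using in1 in2 nd pos by auto
    have "r1 = (num r1 * x1) / (den r1 * x1)"
      using nd[OF in1(1)] pos12 by simp
    also have "\<dots> = (num r2 * x2) / (den r2 * x2)"
      using eq by (simp add: g_def)
    also have "\<dots> = r2"
      using nd[OF in2(1)] pos12 by simp
    finally show "r1 = r2 \<and> x1 = x2"
      using eq pos12 by (simp add: g_def)
  qed
  moreover have "g ` (R \<times> A) \<subseteq> prodset A \<times> prodset A"
    using nd unfolding g_def prodset_def by fastforce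
  ultimately have "card (R \<times> A) \<le> card (prodset A \<times> prodset A)"
    using card_inj_on_le finite_prodset[OF finA] by blast
  then show ?thesis
    unfolding R_def by (simp add: card_cartesian_product power2_eq_square)
qed

lemma sum_card_ratio_fibres:
  assumes finA: "finite A" and pos: "\<forall>a\<in>A. a > 0"
  shows "(\<Sum>r\<in>ratioset A. card {a\<in>A. r * a \<in> A}) = card A ^ 2"
proof -
  have "(\<Sum>r\<in>ratioset A. card {a\<in>A. r * a \<in> A}) = card (SIGMA r:ratioset A. {a\<in>A. r * a \<in> A})"
    using finA by (simp add: card_SigmaI ratioset_def)
  also have "\<dots> = card (A \<times> A)"
  proof (rule bij_betw_same_card[of "\<lambda>(r, a). (a, r * a)"])
    show "bij_betw (\<lambda>(r, a). (a, r * a)) (SIGMA r:ratioset A. {a\<in>A. r * a \<in> A}) (A \<times> A)"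
    proof (rule bij_betw_byWitness[where f' = "\<lambda>(a, b). (b / a, a)"])
      have "b / a \<in> ratioset A" if "a \<in> A" "b \<in> A" for a b
        unfolding ratioset_def using that by (force intro: rev_image_eqI[of "(a, b)"])
      then show "(\<lambda>(a, b). (b / a, a)) ` (A \<times> A) \<subseteq> (SIGMA r:ratioset A. {a\<in>A. r * a \<in> A})"
        using pos by auto
    qed (use pos in auto)
  qed
  finally show ?thesis
    by (simp add: card_cartesian_product power2_eq_square)
qed

text \<open>The ratio set has at most \<open>M\<^sup>2 |A|\<close> elements while its fibre sizes add up to \<open>|A|\<^sup>2\<close>,
  so the ratios with fibres smaller than \<open>|A| / (2 M\<^sup>2)\<close> carry at most half of that mass; every
  other ratio carries at most \<open>|A|\<close>.\<close>

lemma many_rich_ratios: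
  assumes finA: "finite A" and pos: "\<forall>a\<in>A. a > 0" and ne: "A \<noteq> {}"
    and hM: "real (card (prodset A)) \<le> M * real (card A)" and Mp: "M > 0"
  shows "\<exists>R. finite R \<and> real (card A) / 2 \<le> real (card R) \<and>
           (\<forall>r\<in>R. real (card A) \<le> 2 * M^2 * real (card {a\<in>A. r * a \<in> A}))"
proof -
  define n where "n = real (card A)"
  define B where "B r = real (card {a\<in>A. r * a \<in> A})" for r
  define R where "R = {r\<in>ratioset A. n \<le> 2 * M^2 * B r}"
  have np: "n > 0"
    using finA ne unfolding n_def by (simp add: card_gt_0_iff)
  have finQ: "finite (ratioset A)"
    using finA unfolding ratioset_def by simp
  have "real (card (ratioset A)) * n \<le> real (card (prodset A)) ^ 2"
    using card_ratioset_mult_card_le[OF finA pos] unfolding n_def by (simp flip: of_nat_mult of_nat_power)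
  also have "\<dots> \<le> (M * n) ^ 2"
    using hM unfolding n_def by (intro power_mono) auto
  finally have "real (card (ratioset A)) \<le> M^2 * n"
    using np by (simp add: power2_eq_square)
  then have poor: "(\<Sum>r\<in>ratioset A - R. B r) \<le> n^2 / 2"
  proof -
    have "(\<Sum>r\<in>ratioset A - R. B r) \<le> (\<Sum>r\<in>ratioset A - R. n / (2 * M^2))"
      using Mp by (intro sum_mono) (auto simp: R_def field_simps)
    also have "\<dots> = real (card (ratioset A - R)) * (n / (2 * M^2))"
      by simp
    also have "\<dots> \<le> real (card (ratioset A)) * (n / (2 * M^2))"
      using finQ np by (intro mult_right_mono) (auto intro: card_mono)
    also have "\<dots> \<le> M^2 * n * (n / (2 * M^2))"
      using \<open>real (card (ratioset A)) \<le> M^2 * n\<close> np by (intro mult_right_mono) auto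
    finally show ?thesis
      using Mp by (simp add: power2_eq_square)
  qed
  have rich: "(\<Sum>r\<in>R. B r) \<le> real (card R) * n"
    using sum_mono[of R B "\<lambda>_. n"] finA unfolding B_def n_def by (simp add: card_mono)
  have "n^2 = (\<Sum>r\<in>ratioset A. B r)"
    using sum_card_ratio_fibres[OF finA pos] unfolding B_def n_def by (simp flip: of_nat_sum)
  also have "\<dots> = (\<Sum>r\<in>R. B r) + (\<Sum>r\<in>ratioset A - R. B r)"
    using sum.subset_diff[of R "ratioset A" B] finQ by (auto simp: R_def)
  finally have "n^2 \<le> real (card R) * n + n^2 / 2"
    using poor rich by linarith
  then have "n * (n / 2) \<le> n * real (card R)"
    by (simp add: power2_eq_square algebra_simps)
  then have "n / 2 \<le> real (card R)"
    using np by simp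
  then show ?thesis
    using finQ by (intro exI[of _ R]) (auto simp: R_def B_def n_def)
qed

definition sumset_growth :: "nat \<Rightarrow> real \<Rightarrow> real \<Rightarrow> real \<Rightarrow> bool" where
  "sumset_growth k C D e \<longleftrightarrow> (\<forall>M>0. \<forall>A::real set.
     finite A \<and> (\<forall>a\<in>A. a > 0) \<and> real (card (prodset A)) \<le> M * real (card A) \<longrightarrow>
     C / M powr D * real (card A) powr e \<le> real (card (sumset k A)))"

definition growth_exponent :: "nat \<Rightarrow> real \<Rightarrow> bool" where
  "growth_exponent k e \<longleftrightarrow> (\<exists>C>0. \<exists>D>0. sumset_growth k C D e)"

lemma sumset_growth_subset:
  assumes growth: "sumset_growth k C D e" and "C \<ge> 0" "e \<ge> 0"
    and finA: "finite A" and pos: "\<forall>a\<in>A. a > 0" and hM: "real (card (prodset A)) \<le> M * real (card A)"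
    and "M > 0" "B \<subseteq> A" "L > 0" and large: "real (card A) \<le> L * real (card B)"
  shows "C / (M * L) powr D * (real (card A) / L) powr e \<le> real (card (sumset k B))"
proof -
  have "real (card (prodset B)) \<le> real (card (prodset A))"
    using prodset_mono[OF \<open>B \<subseteq> A\<close>] finite_prodset[OF finA] by (simp add: card_mono)
  also have "\<dots> \<le> (M * L) * real (card B)"
    using hM large \<open>M > 0\<close> by (simp add: mult.assoc) (meson mult_left_mono less_imp_le order_trans)
  finally have "C / (M * L) powr D * real (card B) powr e \<le> real (card (sumset k B))"
    using growth \<open>M > 0\<close> \<open>L > 0\<close> \<open>B \<subseteq> A\<close> finA pos
    unfolding sumset_growth_def by (meson mult_pos_pos finite_subset subsetD)
  moreover have "(real (card A) / L) powr e \<le> real (card B) powr e"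
    using large \<open>L > 0\<close> \<open>e \<ge> 0\<close> by (intro powr_mono2) (auto simp: field_simps)
  ultimately show ?thesis
    using \<open>C \<ge> 0\<close> by (meson divide_nonneg_nonneg mult_left_mono order_trans powr_ge_zero)
qed

lemma add_mem_sumset_scaled:
  assumes "B \<subseteq> A" "\<forall>b\<in>B. r * b \<in> A" "B' \<subseteq> A" "\<forall>b\<in>B'. r' * b \<in> A"
    and "s \<in> sumset k1 B" "t \<in> sumset k2 B'"
  shows "s + t \<in> sumset (k1 + k2) A \<and> r * s + r' * t \<in> sumset (k1 + k2) A"
proof -
  have "s \<in> sumset k1 A" "t \<in> sumset k2 A"
    using assms sumset_mono by blast+
  moreover have "r * s \<in> sumset k1 A" "r' * t \<in> sumset k2 A"
    using assms mult_mem_sumset by blast+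
  ultimately show ?thesis
    by (simp add: add_mem_sumset)
qed

lemma sumset_add_sq_ge:
  assumes g1: "sumset_growth k1 C1 D1 e1" and g2: "sumset_growth k2 C2 D2 e2"
    and k: "k1 \<ge> 1" "k2 \<ge> 1" and C: "C1 \<ge> 0" "C2 \<ge> 0" and e: "e1 \<ge> 0" "e2 \<ge> 0"
    and finA: "finite A" and pos: "\<forall>a\<in>A. a > 0" and ne: "A \<noteq> {}"
    and hM: "real (card (prodset A)) \<le> M * real (card A)" and Mp: "M > 0"
  shows "(real (card A) / 2 - 1)
           * (C1 / (M * (2 * M^2)) powr D1 * (real (card A) / (2 * M^2)) powr e1)
           * (C2 / (M * (2 * M^2)) powr D2 * (real (card A) / (2 * M^2)) powr e2)
         \<le> real (card (sumset (k1 + k2) A)) ^ 2"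
proof -
  obtain R where R: "finite R" "real (card A) / 2 \<le> real (card R)"
    and rich: "\<forall>r\<in>R. real (card A) \<le> 2 * M^2 * real (card {a\<in>A. r * a \<in> A})"
    using many_rich_ratios[OF finA pos ne hM Mp] by blast
  define B where "B r = {a\<in>A. r * a \<in> A}" for r
  define L1 where "L1 = C1 / (M * (2 * M^2)) powr D1 * (real (card A) / (2 * M^2)) powr e1"
  define L2 where "L2 = C2 / (M * (2 * M^2)) powr D2 * (real (card A) / (2 * M^2)) powr e2"
  have BA: "B r \<subseteq> A" for r
    unfolding B_def by auto
  then have finB: "finite (B r)" and posB: "\<forall>b\<in>B r. b > 0" for r
    using finA pos finite_subset by blast+
  have M2: "2 * M^2 > 0"
    using Mp by simp
  have L1: "L1 \<le> real (card (sumset k1 (B r)))" and L2: "L2 \<le> real (card (sumset k2 (B r)))"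
    if "r \<in> R" for r
  proof -
    have "real (card A) \<le> 2 * M^2 * real (card (B r))"
      using rich that unfolding B_def by blast
    then show "L1 \<le> real (card (sumset k1 (B r)))" "L2 \<le> real (card (sumset k2 (B r)))"
      unfolding L1_def L2_def
      by (rule sumset_growth_subset[OF g1 C(1) e(1) finA pos hM Mp BA M2],
          rule sumset_growth_subset[OF g2 C(2) e(2) finA pos hM Mp BA M2])
  qed
  have scaled: "\<forall>b\<in>B r. r * b \<in> A" for r
    unfolding B_def by auto
  have "L1 \<ge> 0" "L2 \<ge> 0"
    unfolding L1_def L2_def using C by simp_all
  have "(real (card R) - 1) * L1 * L2 \<le> real (card (sumset (k1 + k2) A)) ^ 2"
  proof (rule card_sq_ge_wedges[where SA = "\<lambda>r. sumset k1 (B r)" and SB = "\<lambda>r. sumset k2 (B r)"])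
    show "\<forall>r\<in>R. finite (sumset k1 (B r)) \<and> finite (sumset k2 (B r))"
      using finite_sumset[OF finB] by blast
    show "\<forall>r\<in>R. (\<forall>s\<in>sumset k1 (B r). s > 0) \<and> (\<forall>t\<in>sumset k2 (B r). t > 0)"
      using sumset_pos[OF k(1) posB] sumset_pos[OF k(2) posB] by blast
    show "\<forall>r\<in>R. \<forall>r'\<in>R. \<forall>s\<in>sumset k1 (B r). \<forall>t\<in>sumset k2 (B r').
        s + t \<in> sumset (k1 + k2) A \<and> r * s + r' * t \<in> sumset (k1 + k2) A"
      using add_mem_sumset_scaled[OF BA scaled BA scaled] by blast
    show "\<forall>r\<in>R. L1 \<le> real (card (sumset k1 (B r)))" "\<forall>r\<in>R. L2 \<le> real (card (sumset k2 (B r)))"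
      using L1 L2 by blast+
  qed (use R(1) finite_sumset[OF finA] \<open>L1 \<ge> 0\<close> \<open>L2 \<ge> 0\<close> in simp_all)
  moreover have "(real (card A) / 2 - 1) * L1 * L2 \<le> (real (card R) - 1) * L1 * L2"
    using R(2) \<open>L1 \<ge> 0\<close> \<open>L2 \<ge> 0\<close> by (intro mult_right_mono) auto
  ultimately have "(real (card A) / 2 - 1) * L1 * L2 \<le> real (card (sumset (k1 + k2) A)) ^ 2"
    by linarith
  then show ?thesis
    by (simp only: L1_def L2_def)
qed

lemma sumset_add_card_ge:
  assumes growth: "sumset_growth k1 C1 D1 e1" "sumset_growth k2 C2 D2 e2"
    and k: "k1 \<ge> 1" "k2 \<ge> 1" and C: "C1 > 0" "C2 > 0" and e: "e1 \<ge> 0" "e2 \<ge> 0"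
    and finA: "finite A" and pos: "\<forall>a\<in>A. a > 0" and four: "real (card A) \<ge> 4"
    and hM: "real (card (prodset A)) \<le> M * real (card A)" and Mp: "M > 0"
  shows "sqrt (C1 * C2 / 4 * 2 powr (- (D1 + D2 + e1 + e2)))
           / M powr ((3 * D1 + 3 * D2 + 2 * e1 + 2 * e2) / 2) * real (card A) powr ((1 + e1 + e2) / 2)
         \<le> real (card (sumset (k1 + k2) A))"
    (is "?lhs \<le> _")
proof -
  define n where "n = real (card A)"
  define L1 where "L1 = C1 / (M * (2 * M^2)) powr D1 * (n / (2 * M^2)) powr e1"
  define L2 where "L2 = C2 / (M * (2 * M^2)) powr D2 * (n / (2 * M^2)) powr e2"
  have "n > 0" "A \<noteq> {}"
    using four unfolding n_def by auto
  have sq_pos: "?lhs ^ 2 > 0" "n / 4 * L1 * L2 > 0"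
    using Mp C \<open>n > 0\<close> unfolding n_def L1_def L2_def by simp_all
  \<comment> \<open>The constants in the statement are chosen to make this an identity.\<close>
  have "ln (?lhs ^ 2) = ln (n / 4 * L1 * L2)"
    using Mp C \<open>n > 0\<close> unfolding n_def L1_def L2_def
    by (simp add: ln_mult ln_div ln_realpow ln_sqrt field_simps)
  then have "?lhs ^ 2 = n / 4 * L1 * L2"
    using ln_inj_iff[OF sq_pos] by blast
  also have "\<dots> \<le> (n / 2 - 1) * L1 * L2"
    using four C unfolding n_def L1_def L2_def by (intro mult_right_mono) auto
  also have "\<dots> \<le> real (card (sumset (k1 + k2) A)) ^ 2"
    using sumset_add_sq_ge[OF growth k _ _ e finA pos \<open>A \<noteq> {}\<close> hM Mp] C
    unfolding n_def L1_def L2_def by simp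
  finally show ?thesis
    by (rule power2_le_imp_le) simp
qed

lemma sumset_growth_small_sets:
  assumes "C \<ge> 0" "C \<le> 3 powr (- e)" "e \<ge> 0" "D \<ge> 0" "M \<ge> 1"
    and "finite A" "A \<noteq> {}" "card A \<le> 3"
  shows "C / M powr D * real (card A) powr e \<le> real (card (sumset k A))"
proof -
  obtain a where "a \<in> A"
    using assms(7) by blast
  then have "sumset k A \<noteq> {}"
    using replicate_sum_mem_sumset by blast
  then have one: "1 \<le> real (card (sumset k A))"
    using finite_sumset[OF assms(6)] by (simp add: Suc_leI card_gt_0_iff)
  have "M powr D \<ge> 1"
    using assms(4,5) by (simp add: ge_one_powr_ge_zero)
  then have "C / M powr D \<le> C / 1"
    using assms(1) by (intro divide_left_mono) auto
  then have "C / M powr D * real (card A) powr e \<le> C * real (card A) powr e"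
    by (intro mult_right_mono) simp_all
  also have "\<dots> \<le> 3 powr (- e) * 3 powr e"
    using assms by (intro mult_mono powr_mono2) auto
  also have "\<dots> = 1"
    by (simp flip: powr_add)
  finally show ?thesis
    using one by linarith
qed

lemma growth_exponent_add:
  assumes g1: "growth_exponent k1 e1" and g2: "growth_exponent k2 e2"
    and k: "k1 \<ge> 1" "k2 \<ge> 1" and e: "e1 \<ge> 0" "e2 \<ge> 0"
  shows "growth_exponent (k1 + k2) ((1 + e1 + e2) / 2)"
proof -
  obtain C1 D1 C2 D2 where C: "C1 > 0" "C2 > 0" and D: "D1 > 0" "D2 > 0"
    and growth: "sumset_growth k1 C1 D1 e1" "sumset_growth k2 C2 D2 e2"
    using g1 g2 unfolding growth_exponent_def by blast
  define K where "K = C1 * C2 / 4 * 2 powr (- (D1 + D2 + e1 + e2))"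
  define D where "D = (3 * D1 + 3 * D2 + 2 * e1 + 2 * e2) / 2"
  define e where "e = (1 + e1 + e2) / 2"
  \<comment> \<open>\<open>3 powr (- e)\<close> covers \<open>|A| \<le> 3\<close>, where \<open>|A| / 2 - 1 \<ge> |A| / 4\<close> fails.\<close>
  define C where "C = min (sqrt K) (3 powr (- e))"
  have "K > 0" "D > 0" "e \<ge> 0"
    using C D e unfolding K_def D_def e_def by simp_all
  then have "C > 0"
    unfolding C_def by simp
  have "sumset_growth (k1 + k2) C D e"
    unfolding sumset_growth_def
  proof (intro allI impI, elim conjE)
    fix M :: real and A :: "real set"
    assume Mp: "M > 0" and finA: "finite A" and pos: "\<forall>a\<in>A. a > 0"
      and hM: "real (card (prodset A)) \<le> M * real (card A)"
    consider "A = {}" | "A \<noteq> {}" "card A \<le> 3" | "real (card A) \<ge> 4"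
      by fastforce
    then show "C / M powr D * real (card A) powr e \<le> real (card (sumset (k1 + k2) A))"
    proof cases
      case 2
      then show ?thesis
        using sumset_growth_small_sets[of C e D M A] doubling_constant_ge_1[OF finA pos _ hM]
          \<open>C > 0\<close> \<open>D > 0\<close> \<open>e \<ge> 0\<close> finA unfolding C_def by simp
    next
      case 3
      have "C / M powr D * real (card A) powr e \<le> sqrt K / M powr D * real (card A) powr e"
        unfolding C_def by (intro mult_right_mono divide_right_mono) auto
      also have "\<dots> \<le> real (card (sumset (k1 + k2) A))"
        using sumset_add_card_ge[OF growth k C e finA pos 3 hM Mp] unfolding K_def D_def e_def .
      finally show ?thesis .
    qed simp
  qed
  then show ?thesis
    using \<open>C > 0\<close> \<open>D > 0\<close> unfolding growth_exponent_def e_def by blast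
qed

lemma growth_exponent_1: "growth_exponent 1 1"
  unfolding growth_exponent_def sumset_growth_def
proof (intro exI[of _ 1] conjI allI impI; (elim conjE)?)
  fix M :: real and A :: "real set"
  assume "M > 0" "finite A" "\<forall>a\<in>A. a > 0" "real (card (prodset A)) \<le> M * real (card A)"
  then have "real (card A) \<le> M * real (card A)"
    using card_le_card_prodset by (meson of_nat_le_iff order_trans)
  then show "1 / M powr 1 * real (card A) powr 1 \<le> real (card (sumset 1 A))"
    unfolding sumset_1 using \<open>M > 0\<close> by (simp add: divide_le_eq mult.commute)
qed simp_all

lemma growth_exponent_mono:
  assumes "growth_exponent k e" "k \<le> k'" "e' \<le> e"
  shows "growth_exponent k' e'"
proof -
  obtain C D where CD: "C > 0" "D > 0" and growth: "sumset_growth k C D e"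
    using assms(1) unfolding growth_exponent_def by blast
  have "sumset_growth k' C D e'"
    unfolding sumset_growth_def
  proof (intro allI impI)
    fix M :: real and A :: "real set"
    assume M: "M > 0" and hA: "finite A \<and> (\<forall>a\<in>A. a > 0) \<and> real (card (prodset A)) \<le> M * real (card A)"
    show "C / M powr D * real (card A) powr e' \<le> real (card (sumset k' A))"
    proof (cases "A = {}")
      case False
      then have "real (card A) powr e' \<le> real (card A) powr e"
        using hA assms(3) by (intro powr_mono) (auto simp: Suc_leI card_gt_0_iff)
      then have "C / M powr D * real (card A) powr e' \<le> C / M powr D * real (card A) powr e"
        using CD by (intro mult_left_mono) auto
      also have "\<dots> \<le> real (card (sumset k A))"
        using growth M hA unfolding sumset_growth_def by blast
      also have "\<dots> \<le> real (card (sumset k' A))"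
        using card_sumset_mono hA False assms(2) by simp
      finally show ?thesis .
    qed simp
  qed
  then show ?thesis
    using CD unfolding growth_exponent_def by blast
qed

lemma growth_exponent_recursive:
  fixes \<Psi> :: "nat \<Rightarrow> real"
  assumes psi1: "\<Psi> 1 = 1"
    and psi_rec: "\<forall>k\<ge>2. \<exists>k1 k2. k1 \<ge> 1 \<and> k2 \<ge> 1 \<and> k1 + k2 = k \<and> \<Psi> k = (1 + \<Psi> k1 + \<Psi> k2) / 2"
  shows "k \<ge> 1 \<Longrightarrow> growth_exponent k (\<Psi> k) \<and> \<Psi> k \<ge> 1"
proof (induction k rule: less_induct)
  case (less k)
  show ?case
  proof (cases "k = 1")
    case True
    then show ?thesis
      using psi1 growth_exponent_1 by simp
  next
    case False
    then have "k \<ge> 2"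
      using less.prems by simp
    then obtain k1 k2 where kk: "k1 \<ge> 1" "k2 \<ge> 1" "k1 + k2 = k" "\<Psi> k = (1 + \<Psi> k1 + \<Psi> k2) / 2"
      using psi_rec by blast
    then have "growth_exponent k1 (\<Psi> k1) \<and> \<Psi> k1 \<ge> 1" "growth_exponent k2 (\<Psi> k2) \<and> \<Psi> k2 \<ge> 1"
      using less.IH by simp_all
    then have "growth_exponent (k1 + k2) ((1 + \<Psi> k1 + \<Psi> k2) / 2)" "\<Psi> k \<ge> 1"
      using growth_exponent_add[of k1 "\<Psi> k1" k2 "\<Psi> k2"] kk by simp_all
    then show ?thesis
      using kk(3,4) by metis
  qed
qed

lemma growth_exponent_power_2: "growth_exponent (2 ^ m) (1 + real m / 2)"
proof (induction m)
  case 0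
  then show ?case
    using growth_exponent_1 by simp
next
  case (Suc m)
  have "growth_exponent (2 ^ m + 2 ^ m) ((1 + (1 + real m / 2) + (1 + real m / 2)) / 2)"
    by (rule growth_exponent_add[OF Suc.IH Suc.IH]) simp_all
  moreover have "(1 + (1 + real m / 2) + (1 + real m / 2)) / 2 = 1 + real (Suc m) / 2"
    by simp
  moreover have "(2::nat) ^ m + 2 ^ m = 2 ^ Suc m"
    by simp
  ultimately show ?case
    by metis
qed

lemma log4_double_le:
  assumes "2 ^ m \<le> k" "k < 2 ^ (m + 1)"
  shows "log 4 (2 * real k) \<le> 1 + real m / 2"
proof -
  have "(0::nat) < 2 ^ m"
    by simp
  then have "real k > 0"
    using assms(1) by linarith
  moreover have "2 * real k \<le> 2 ^ (m + 2)"
    using assms(2) of_nat_le_iff[of k "2 ^ (m + 1)"] by simp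
  ultimately have "log 4 (2 * real k) \<le> log 4 (2 ^ (m + 2))"
    by simp
  also have "\<dots> = log 2 (2 ^ (m + 2)) / 2"
    using log_base_pow[of "2::real" 2 "2 ^ (m + 2)"] by simp
  also have "\<dots> = real (m + 2) / 2"
    by (simp del: power_Suc)
  finally show ?thesis
    by simp
qed

lemma growth_exponent_log4:
  assumes "k \<ge> 1"
  shows "growth_exponent k (log 4 (2 * real k))"
proof -
  obtain m where "2 ^ m \<le> k" "k < 2 ^ (m + 1)"
    using ex_power_ivl1[of 2 k] assms by auto
  then show ?thesis
    using growth_exponent_mono[OF growth_exponent_power_2] log4_double_le by blast
qed

theorem theorem1p2:
  fixes \<Psi> :: "nat \<Rightarrow> real"
  assumes psi1: "\<Psi> 1 = 1"
    and psi_rec: "\<forall>k\<ge>2. \<exists>k1 k2. k1 \<ge> 1 \<and> k2 \<ge> 1 \<and> k1 + k2 = k \<and>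
                     \<Psi> k = (1 + \<Psi> k1 + \<Psi> k2) / 2"
  shows "(\<forall>k::nat\<ge>2. \<exists>C>0. \<exists>D>0. \<forall>M::real>0. \<forall>A::real set.
            finite A \<and> (\<forall>a\<in>A. a > 0) \<and> real (card (prodset A)) \<le> M * real (card A) \<longrightarrow>
            real (card (sumset k A)) \<ge> C / M powr D * real (card A) powr \<Psi> k)
       \<and> (\<forall>k::nat\<ge>2. \<exists>C>0. \<exists>D>0. \<forall>M::real>0. \<forall>A::real set.
            finite A \<and> (\<forall>a\<in>A. a > 0) \<and> real (card (prodset A)) \<le> M * real (card A) \<longrightarrow>
            real (card (sumset k A)) \<ge> C / M powr D * real (card A) powr log 4 (2 * real k))"
  using growth_exponent_recursive[OF psi1 psi_rec] growth_exponent_log4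
  unfolding growth_exponent_def sumset_growth_def by simp

end
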